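(* Let $p>0$ and let $f$ be a $p$-knowable Boolean function. Then for every $k\in\mathbb N$, $$I_k(f)\le\frac{\mathbb E[(\max W(f))^p]}{k^p}.$$
   Context: Let $\Omega=\{-1,1\}$ and $\Omega^\infty=\{-1,1\}^{\mathbb N}$ with the uniform product probability measure; $\omega$ denotes a uniformly random element. A Boolean function is a measurable map $f:\Omega^\infty\to\Omega$. $\omega^{(k)}$ is $\omega$ with bit $k$ flipped; $I_k(f)=\mathbb P(f(\omega^{(k)})\ne f(\omega))$. A set $W\subseteq\mathbb N$ is a witness set for $f$ at $\omega$ if there is an event $A$ with $\mathbb P(A)=1$ such that for all $\tilde\omega\in A$: if $\tilde\omega_i=\omega_i$ for all $i\in W$ then $f(\tilde\omega)=f(\omega)$. $f$ is finitary if almost surely a finite witness set exists; then $W(f)(\omega)$ denotes the least finite witness set in the order: smaller maximum first, then smaller cardinality, then lexicographic. $f$ is $p$-knowable if it is finitary and $\mathbb E[(\max W(f))^p]<\infty$. *)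

theory Defs
  imports "HOL-Probability.Probability"
begin

definition OmegaInf :: "(nat \<Rightarrow> int) measure" where
  "OmegaInf = (\<Pi>\<^sub>M i\<in>{1..}. uniform_count_measure {-1, 1::int})"

definition flip_bit :: "nat \<Rightarrow> (nat \<Rightarrow> int) \<Rightarrow> (nat \<Rightarrow> int)" where
  "flip_bit k x = x(k := - (x k))"

definition boolean_fun :: "((nat \<Rightarrow> int) \<Rightarrow> int) \<Rightarrow> bool" where
  "boolean_fun f \<longleftrightarrow> f \<in> OmegaInf \<rightarrow>\<^sub>M count_space {-1, 1}"

definition influence :: "((nat \<Rightarrow> int) \<Rightarrow> int) \<Rightarrow> nat \<Rightarrow> real" where
  "influence f k = measure OmegaInf {\<omega> \<in> space OmegaInf. f (flip_bit k \<omega>) \<noteq> f \<omega>}"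

definition witness_set :: "((nat \<Rightarrow> int) \<Rightarrow> int) \<Rightarrow> (nat \<Rightarrow> int) \<Rightarrow> nat set \<Rightarrow> bool" where
  "witness_set f \<omega> W \<longleftrightarrow> W \<subseteq> {1..} \<and>
     (\<exists>A \<in> sets OmegaInf. measure OmegaInf A = 1 \<and>
        (\<forall>\<omega>' \<in> A. (\<forall>i \<in> W. \<omega>' i = \<omega> i) \<longrightarrow> f \<omega>' = f \<omega>))"

definition finitary :: "((nat \<Rightarrow> int) \<Rightarrow> int) \<Rightarrow> bool" where
  "finitary f \<longleftrightarrow> (AE \<omega> in OmegaInf. \<exists>W. finite W \<and> witness_set f \<omega> W)"

definition maxset :: "nat set \<Rightarrow> nat" where
  "maxset W = (if W = {} then 0 else Max W)"

definition wset_less :: "nat set \<Rightarrow> nat set \<Rightarrow> bool" where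
  "wset_less W V \<longleftrightarrow> maxset W < maxset V \<or>
     (maxset W = maxset V \<and> (card W < card V \<or>
       (card W = card V \<and> ord_class.lexordp (sorted_list_of_set W) (sorted_list_of_set V))))"

definition Wf :: "((nat \<Rightarrow> int) \<Rightarrow> int) \<Rightarrow> (nat \<Rightarrow> int) \<Rightarrow> nat set" where
  "Wf f \<omega> = (THE W. finite W \<and> witness_set f \<omega> W \<and>
      (\<forall>V. finite V \<and> witness_set f \<omega> V \<and> V \<noteq> W \<longrightarrow> wset_less W V))"

definition moment_maxW :: "real \<Rightarrow> ((nat \<Rightarrow> int) \<Rightarrow> int) \<Rightarrow> ennreal" where
  "moment_maxW p f = (\<integral>\<^sup>+ \<omega>. ennreal (real (maxset (Wf f \<omega>)) powr p) \<partial>OmegaInf)"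

definition p_knowable :: "real \<Rightarrow> ((nat \<Rightarrow> int) \<Rightarrow> int) \<Rightarrow> bool" where
  "p_knowable p f \<longleftrightarrow> boolean_fun f \<and> finitary f \<and> moment_maxW p f < \<infinity>"

end

theory Submission
  imports Defs
begin

text \<open>If flipping bit \<open>k\<close> changes \<open>f(\<omega>)\<close>, no witness set for \<open>f\<close> at \<open>\<omega>\<close> can lie below \<open>k\<close>:
  otherwise \<open>f\<close> would be almost surely equal to \<open>f(\<omega>)\<close> on the cylinder fixing the bits below \<open>k\<close>,
  a cylinder which contains \<open>\<omega>\<^sup>(\<^sup>k\<^sup>)\<close>. Since flipping a bit preserves the measure and there are only
  finitely many such cylinders, the exceptional points where \<open>\<omega>\<^sup>(\<^sup>k\<^sup>)\<close> falls into a null set are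
  negligible. Hence \<open>max W(f) \<ge> k\<close> almost surely on the event \<open>f(\<omega>\<^sup>(\<^sup>k\<^sup>)) \<noteq> f(\<omega>)\<close>, and
  Markov's inequality for \<open>(max W(f))\<^sup>p\<close> gives the bound.\<close>

abbreviation coin :: "int measure" where
  "coin \<equiv> uniform_count_measure {-1, 1}"

lemma prob_space_coin: "prob_space coin"
  by (rule prob_space_uniform_count_measure) auto

lemma prob_space_OmegaInf: "prob_space OmegaInf"
  unfolding OmegaInf_def by (rule prob_space_PiM) (rule prob_space_coin)

lemma space_OmegaInf: "space OmegaInf = {1..} \<rightarrow>\<^sub>E {-1, 1}"
  unfolding OmegaInf_def by (simp add: space_PiM space_uniform_count_measure)

lemma component_measurable_OmegaInf[measurable]:
  "(\<lambda>\<omega>. \<omega> i) \<in> OmegaInf \<rightarrow>\<^sub>M count_space UNIV"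
proof (cases "i \<ge> 1")
  case True
  have "(\<lambda>\<omega>. \<omega> i) \<in> OmegaInf \<rightarrow>\<^sub>M coin"
    unfolding OmegaInf_def by (rule measurable_component_singleton) (use True in simp)
  then have "(\<lambda>\<omega>. \<omega> i) \<in> OmegaInf \<rightarrow>\<^sub>M count_space {-1, 1}"
    by (simp add: measurable_cong_sets[OF refl sets_uniform_count_measure_count_space])
  then show ?thesis
    using measurable_compose[OF _ measurable_count_space[of "\<lambda>x::int. x" "{-1, 1}"]] by blast
next
  case False
  then have "\<omega> i = undefined" if "\<omega> \<in> space OmegaInf" for \<omega>
    using that by (auto simp: space_OmegaInf PiE_def extensional_def)
  then show ?thesis
    using measurable_cong[of OmegaInf "\<lambda>\<omega>. \<omega> i" "\<lambda>_. undefined"] by simp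
qed

lemma boolean_fun_measurable:
  "boolean_fun f \<Longrightarrow> f \<in> OmegaInf \<rightarrow>\<^sub>M count_space UNIV"
  unfolding boolean_fun_def
  using measurable_compose[OF _ measurable_count_space[of "\<lambda>x::int. x" "{-1, 1}"]] by blast

lemma flip_bit_in_space:
  "k \<ge> 1 \<Longrightarrow> \<omega> \<in> space OmegaInf \<Longrightarrow> flip_bit k \<omega> \<in> space OmegaInf"
  unfolding space_OmegaInf flip_bit_def by (auto simp: PiE_iff extensional_def)

lemma uminus_measurable_coin: "uminus \<in> coin \<rightarrow>\<^sub>M coin"
proof -
  have "uminus \<in> count_space {-1, 1::int} \<rightarrow>\<^sub>M coin"
    by (simp add: measurable_count_space_eq1 space_uniform_count_measure)
  then show ?thesis
    by (subst measurable_cong_sets[OF sets_uniform_count_measure_count_space refl])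
qed

lemma measurable_flip_bit[measurable]:
  assumes "k \<ge> 1"
  shows "flip_bit k \<in> OmegaInf \<rightarrow>\<^sub>M OmegaInf"
  unfolding OmegaInf_def
proof (rule measurable_PiM_single')
  have component: "(\<lambda>\<omega>. \<omega> j) \<in> (\<Pi>\<^sub>M i\<in>{1..}. coin) \<rightarrow>\<^sub>M coin" if "j \<ge> 1" for j
    by (rule measurable_component_singleton) (use that in simp)
  fix i :: nat assume "i \<in> {1..}"
  then show "(\<lambda>\<omega>. flip_bit k \<omega> i) \<in> (\<Pi>\<^sub>M i\<in>{1..}. coin) \<rightarrow>\<^sub>M coin"
    using measurable_compose[OF component[OF assms] uminus_measurable_coin] component
    by (cases "i = k") (auto simp: flip_bit_def)
next
  show "flip_bit k \<in> space (\<Pi>\<^sub>M i\<in>{1..}. coin) \<rightarrow> (\<Pi>\<^sub>E i\<in>{1..}. space coin)"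
    using flip_bit_in_space[OF assms] unfolding OmegaInf_def by (simp add: space_PiM)
qed

lemma emeasure_coin_uminus:
  "B \<subseteq> {-1, 1} \<Longrightarrow> emeasure coin (uminus ` B) = emeasure coin B"
proof -
  assume B: "B \<subseteq> {-1, 1}"
  then have "uminus ` B \<subseteq> {-1, 1}" by auto
  moreover have "card (uminus ` B) = card B" by (rule card_image) (simp add: inj_on_def)
  ultimately show ?thesis using B by (simp add: emeasure_uniform_count_measure)
qed

lemma distr_flip_bit:
  assumes k: "k \<ge> 1"
  shows "distr OmegaInf OmegaInf (flip_bit k) = OmegaInf"
  unfolding OmegaInf_def
proof (rule measure_eqI_PiM_infinite[symmetric, OF refl])
  let ?\<Omega> = "\<Pi>\<^sub>M i\<in>{1::nat..}. coin"
  interpret prob_space ?\<Omega>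
    using prob_space_OmegaInf unfolding OmegaInf_def .
  show "sets (distr ?\<Omega> ?\<Omega> (flip_bit k)) = sets ?\<Omega>" by simp
  show "finite_measure ?\<Omega>" by unfold_locales
  fix J :: "nat set" and A assume J: "finite J" "J \<subseteq> {1..}" and A: "\<And>i. i \<in> J \<Longrightarrow> A i \<in> sets coin"
  define A' where "A' j = (if j = k then uminus ` A j else A j)" for j
  have A'_sets: "A' i \<in> sets coin" if "i \<in> J" for i
    using A[OF that] unfolding A'_def by (auto simp: sets_uniform_count_measure)
  have "flip_bit k -` prod_emb {1..} (\<lambda>_. coin) J (Pi\<^sub>E J A) \<inter> space ?\<Omega>
      = prod_emb {1..} (\<lambda>_. coin) J (Pi\<^sub>E J A')"
  proof (intro set_eqI)
    fix x
    have cylinder: "\<omega> \<in> prod_emb {1..} (\<lambda>_. coin) J (Pi\<^sub>E J B) \<longleftrightarrow> (\<forall>j\<in>J. \<omega> j \<in> B j)"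
      if "\<omega> \<in> space ?\<Omega>" for \<omega> B
      using that by (auto simp: prod_emb_def space_PiM PiE_iff)
    have flip_iff: "flip_bit k x j \<in> A j \<longleftrightarrow> x j \<in> A' j" for j
      unfolding A'_def flip_bit_def by (force simp: image_iff)
    show "x \<in> flip_bit k -` prod_emb {1..} (\<lambda>_. coin) J (Pi\<^sub>E J A) \<inter> space ?\<Omega>
      \<longleftrightarrow> x \<in> prod_emb {1..} (\<lambda>_. coin) J (Pi\<^sub>E J A')"
    proof (cases "x \<in> space ?\<Omega>")
      case True
      then have "flip_bit k x \<in> space ?\<Omega>"
        using flip_bit_in_space[OF k] unfolding OmegaInf_def by blast
      then show ?thesis
        using True cylinder flip_iff by auto
    next
      case False
      then show ?thesis
        using prod_emb_subset_PiM[of "{1..}" "\<lambda>_. coin" J] by blast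
    qed
  qed
  then have "emeasure (distr ?\<Omega> ?\<Omega> (flip_bit k)) (prod_emb {1..} (\<lambda>_. coin) J (Pi\<^sub>E J A))
      = emeasure ?\<Omega> (prod_emb {1..} (\<lambda>_. coin) J (Pi\<^sub>E J A'))"
    using J A measurable_flip_bit[OF k]
    by (subst emeasure_distr) (auto simp: OmegaInf_def intro!: sets_PiM_I)
  also have "\<dots> = (\<Prod>j\<in>J. emeasure coin (A' j))"
    using J A'_sets by (intro emeasure_PiM_emb prob_space_coin) auto
  also have "\<dots> = (\<Prod>j\<in>J. emeasure coin (A j))"
    using A unfolding A'_def
    by (intro prod.cong refl) (auto simp: sets_uniform_count_measure emeasure_coin_uminus)
  also have "\<dots> = emeasure ?\<Omega> (prod_emb {1..} (\<lambda>_. coin) J (Pi\<^sub>E J A))"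
    using J A by (intro emeasure_PiM_emb[symmetric] prob_space_coin) auto
  finally show "emeasure ?\<Omega> (prod_emb {1..} (\<lambda>_. coin) J (Pi\<^sub>E J A))
      = emeasure (distr ?\<Omega> ?\<Omega> (flip_bit k)) (prod_emb {1..} (\<lambda>_. coin) J (Pi\<^sub>E J A))"
    by (rule sym)
qed

lemma AE_flip_bit_not_in_null_set:
  assumes "k \<ge> 1" and "N \<in> null_sets OmegaInf"
  shows "AE \<omega> in OmegaInf. flip_bit k \<omega> \<notin> N"
proof -
  have "AE \<omega> in distr OmegaInf OmegaInf (flip_bit k). \<omega> \<notin> N"
    using AE_not_in[OF assms(2)] by (simp only: distr_flip_bit[OF assms(1)])
  then show ?thesis
    using assms by (subst (asm) AE_distr_iff) auto
qed

lemma wset_less_irrefl: "\<not> wset_less W W"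
  unfolding wset_less_def by (auto simp: lexordp_irreflexive)

lemma wset_less_trans: "wset_less U V \<Longrightarrow> wset_less V W \<Longrightarrow> wset_less U W"
  unfolding wset_less_def by (elim disjE conjE) (auto intro: lexordp_trans)

lemma wset_less_asym: "wset_less V W \<Longrightarrow> \<not> wset_less W V"
  using wset_less_trans wset_less_irrefl by blast

lemma wset_less_linear:
  assumes "finite V" "finite W" "V \<noteq> W"
  shows "wset_less V W \<or> wset_less W V"
proof -
  have "sorted_list_of_set V \<noteq> sorted_list_of_set W"
    using assms by (metis set_sorted_list_of_set)
  then show ?thesis
    using lexordp_linear[of "sorted_list_of_set V" "sorted_list_of_set W"]
    unfolding wset_less_def by auto
qed

lemma finite_family_has_wset_least:
  assumes "finite X" "X \<noteq> {}" "\<forall>W\<in>X. finite W"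
  shows "\<exists>W\<in>X. \<forall>V\<in>X. V \<noteq> W \<longrightarrow> wset_less W V"
  using assms
proof (induction X rule: finite_ne_induct)
  case (singleton U)
  then show ?case by auto
next
  case (insert U X)
  then obtain W where W: "W \<in> X" "\<forall>V\<in>X. V \<noteq> W \<longrightarrow> wset_less W V" by auto
  show ?case
  proof (cases "wset_less U W")
    case True
    then show ?thesis
      using W insert.hyps(2) wset_less_trans by (intro bexI[of _ U]) auto
  next
    case False
    then have "U \<noteq> W \<longrightarrow> wset_less W U"
      using wset_less_linear insert.prems W(1) by auto
    then show ?thesis using W by (intro bexI[of _ W]) auto
  qed
qed

lemma subset_atMost_maxset: "finite W \<Longrightarrow> W \<subseteq> {..maxset W}"
  unfolding maxset_def by auto

text \<open>Only finitely many sets have a given maximum, so it suffices to minimise the maximum first.\<close>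

lemma family_has_wset_least:
  assumes "X \<noteq> {}" "\<forall>W\<in>X. finite W"
  shows "\<exists>W\<in>X. \<forall>V\<in>X. V \<noteq> W \<longrightarrow> wset_less W V"
proof -
  define m where "m = (LEAST m. \<exists>W\<in>X. maxset W = m)"
  define X\<^sub>m where "X\<^sub>m = {W\<in>X. maxset W = m}"
  have m_le: "m \<le> maxset V" if "V \<in> X" for V
    unfolding m_def using that by (blast intro: Least_le)
  have "X\<^sub>m \<noteq> {}"
    using assms(1) LeastI_ex[of "\<lambda>m. \<exists>W\<in>X. maxset W = m"] unfolding X\<^sub>m_def m_def by blast
  moreover have "finite X\<^sub>m"
    using assms(2) subset_atMost_maxset
    by (intro finite_subset[of X\<^sub>m "Pow {..m}"]) (auto simp: X\<^sub>m_def)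
  ultimately obtain W where W: "W \<in> X\<^sub>m" "\<forall>V\<in>X\<^sub>m. V \<noteq> W \<longrightarrow> wset_less W V"
    using finite_family_has_wset_least[of X\<^sub>m] assms(2) unfolding X\<^sub>m_def by blast
  have "wset_less W V" if "V \<in> X" "V \<noteq> W" for V
  proof (cases "maxset V = m")
    case True
    then show ?thesis using W that unfolding X\<^sub>m_def by blast
  next
    case False
    then show ?thesis
      using W(1) m_le[OF that(1)] unfolding X\<^sub>m_def wset_less_def by simp
  qed
  then show ?thesis using W(1) unfolding X\<^sub>m_def by blast
qed

lemma Wf_witness_set:
  assumes "\<exists>W. finite W \<and> witness_set f \<omega> W"
  shows "finite (Wf f \<omega>)" and "witness_set f \<omega> (Wf f \<omega>)"
proof -
  define least where "least W \<longleftrightarrow> finite W \<and> witness_set f \<omega> W \<and>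
      (\<forall>V. finite V \<and> witness_set f \<omega> V \<and> V \<noteq> W \<longrightarrow> wset_less W V)" for W
  have "{W. finite W \<and> witness_set f \<omega> W} \<noteq> {}"
    using assms by blast
  then obtain W where "least W"
    using family_has_wset_least[of "{W. finite W \<and> witness_set f \<omega> W}"]
    unfolding least_def by blast
  moreover have "V = W" if "least V" for V
    using that \<open>least W\<close> wset_less_asym unfolding least_def by blast
  ultimately have "least (THE W. least W)"
    by (rule theI)
  then show "finite (Wf f \<omega>)" and "witness_set f \<omega> (Wf f \<omega>)"
    unfolding least_def Wf_def by simp_all
qed

lemma witness_set_AE_agree:
  assumes "witness_set f \<omega> W"
  shows "AE \<omega>' in OmegaInf. (\<forall>i\<in>W. \<omega>' i = \<omega> i) \<longrightarrow> f \<omega>' = f \<omega>"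
proof -
  interpret prob_space OmegaInf by (rule prob_space_OmegaInf)
  obtain A where A: "A \<in> sets OmegaInf" "measure OmegaInf A = 1"
      "\<forall>\<omega>'\<in>A. (\<forall>i\<in>W. \<omega>' i = \<omega> i) \<longrightarrow> f \<omega>' = f \<omega>"
    using assms unfolding witness_set_def by blast
  have "AE \<omega>' in OmegaInf. \<omega>' \<in> A"
    using A(1,2) by (simp add: AE_in_set_eq_1)
  then show ?thesis
    by eventually_elim (use A(3) in blast)
qed

definition cylinder_disagreement ::
    "((nat \<Rightarrow> int) \<Rightarrow> int) \<Rightarrow> nat \<Rightarrow> (nat \<Rightarrow> int) \<Rightarrow> (nat \<Rightarrow> int) set" where
  "cylinder_disagreement f k \<omega> =
     {\<omega>' \<in> space OmegaInf. (\<forall>i\<in>{1..<k}. \<omega>' i = \<omega> i) \<and> f \<omega>' \<noteq> f \<omega>}"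

lemma cylinder_disagreement_sets:
  "boolean_fun f \<Longrightarrow> cylinder_disagreement f k \<omega> \<in> sets OmegaInf"
  using boolean_fun_measurable[of f] unfolding cylinder_disagreement_def by measurable

lemma cylinder_disagreement_null:
  assumes "boolean_fun f" "witness_set f \<omega> W" "W \<subseteq> {..<k}"
  shows "cylinder_disagreement f k \<omega> \<in> null_sets OmegaInf"
proof -
  have "W \<subseteq> {1..<k}"
    using assms(2,3) unfolding witness_set_def by auto
  have "AE \<omega>' in OmegaInf. \<omega>' \<notin> cylinder_disagreement f k \<omega>"
    using witness_set_AE_agree[OF assms(2)]
    by eventually_elim (use \<open>W \<subseteq> {1..<k}\<close> in \<open>auto simp: cylinder_disagreement_def\<close>)
  then show ?thesis
    using AE_iff_null_sets[OF cylinder_disagreement_sets[OF assms(1)]] by blast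
qed

lemma finite_cylinder_disagreements:
  assumes "boolean_fun f"
  shows "finite (cylinder_disagreement f k ` space OmegaInf)"
proof -
  define cyl where "cyl = (\<lambda>(\<tau>, b). {\<omega>' \<in> space OmegaInf. (\<forall>i\<in>{1..<k}. \<omega>' i = \<tau> i) \<and> f \<omega>' \<noteq> b})"
  have "cylinder_disagreement f k \<omega> \<in> cyl ` (({1..<k} \<rightarrow>\<^sub>E {-1, 1}) \<times> {-1, 1})"
    if "\<omega> \<in> space OmegaInf" for \<omega>
  proof
    show "cylinder_disagreement f k \<omega> = cyl (restrict \<omega> {1..<k}, f \<omega>)"
      unfolding cyl_def cylinder_disagreement_def by simp
    show "(restrict \<omega> {1..<k}, f \<omega>) \<in> ({1..<k} \<rightarrow>\<^sub>E {-1, 1}) \<times> {-1, 1}"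
      using that assms measurable_space[of f OmegaInf "count_space {-1, 1}"]
      unfolding boolean_fun_def space_OmegaInf by auto
  qed
  then show ?thesis
    by (intro finite_surj[of "({1..<k} \<rightarrow>\<^sub>E {-1, 1}) \<times> {-1, 1}" _ cyl])
       (auto intro: finite_PiE)
qed

lemma AE_flip_bit_avoids_null_cylinder_disagreements:
  assumes "k \<ge> 1" "boolean_fun f"
  shows "AE \<omega> in OmegaInf. \<forall>N \<in> cylinder_disagreement f k ` space OmegaInf.
           N \<in> null_sets OmegaInf \<longrightarrow> flip_bit k \<omega> \<notin> N"
  using finite_cylinder_disagreements[OF assms(2)]
proof (rule AE_finite_allI)
  fix N
  show "AE \<omega> in OmegaInf. N \<in> null_sets OmegaInf \<longrightarrow> flip_bit k \<omega> \<notin> N"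
    using AE_flip_bit_not_in_null_set[OF assms(1)] by (cases "N \<in> null_sets OmegaInf") simp_all
qed

lemma AE_witness_set_reaches_pivotal_bit:
  assumes "k \<ge> 1" "boolean_fun f"
  shows "AE \<omega> in OmegaInf. f (flip_bit k \<omega>) \<noteq> f \<omega> \<longrightarrow>
           (\<forall>W. witness_set f \<omega> W \<longrightarrow> \<not> W \<subseteq> {..<k})"
  using AE_flip_bit_avoids_null_cylinder_disagreements[OF assms] AE_space
proof eventually_elim
  case (elim \<omega>)
  show ?case
  proof (intro impI allI notI)
    fix W assume pivotal: "f (flip_bit k \<omega>) \<noteq> f \<omega>"
      and "witness_set f \<omega> W" "W \<subseteq> {..<k}"
    then have "flip_bit k \<omega> \<notin> cylinder_disagreement f k \<omega>"
      using elim cylinder_disagreement_null[OF assms(2)] by blast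
    moreover have "flip_bit k \<omega> \<in> cylinder_disagreement f k \<omega>"
      using pivotal flip_bit_in_space[OF assms(1) elim(2)]
      unfolding cylinder_disagreement_def flip_bit_def by simp
    ultimately show False by contradiction
  qed
qed

lemma le_maxset_if_not_subset_lessThan:
  "finite W \<Longrightarrow> \<not> W \<subseteq> {..<k} \<Longrightarrow> k \<le> maxset W"
  using subset_atMost_maxset[of W] by fastforce

lemma mult_emeasure_le_nn_integral:
  assumes "A \<in> sets M" "AE x in M. x \<in> A \<longrightarrow> c \<le> g x"
  shows "c * emeasure M A \<le> (\<integral>\<^sup>+ x. g x \<partial>M)"
proof -
  have "c * emeasure M A = (\<integral>\<^sup>+ x. c * indicator A x \<partial>M)"
    using assms(1) by (simp add: nn_integral_cmult_indicator)
  also have "\<dots> \<le> (\<integral>\<^sup>+ x. g x \<partial>M)"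
    using assms(2) by (intro nn_integral_mono_AE) (auto split: split_indicator)
  finally show ?thesis .
qed

theorem mainTheorem11:
  fixes p :: real and f :: "(nat \<Rightarrow> int) \<Rightarrow> int" and k :: nat
  assumes "p > 0" and "p_knowable p f" and "k \<ge> 1"
  shows "influence f k \<le> enn2real (moment_maxW p f) / real k powr p"
proof -
  interpret prob_space OmegaInf by (rule prob_space_OmegaInf)
  have boolean: "boolean_fun f" and finitary: "finitary f" and moment: "moment_maxW p f < \<infinity>"
    using assms(2) unfolding p_knowable_def by auto
  note [measurable] = boolean_fun_measurable[OF boolean] measurable_flip_bit[OF assms(3)]
  define S where "S = {\<omega> \<in> space OmegaInf. f (flip_bit k \<omega>) \<noteq> f \<omega>}"
  have "AE \<omega> in OmegaInf. \<omega> \<in> S \<longrightarrow> k \<le> maxset (Wf f \<omega>)"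
    using AE_witness_set_reaches_pivotal_bit[OF assms(3) boolean] finitary[unfolded finitary_def]
  proof eventually_elim
    case (elim \<omega>)
    then show ?case
      using Wf_witness_set[of f \<omega>] le_maxset_if_not_subset_lessThan unfolding S_def by blast
  qed
  then have "AE \<omega> in OmegaInf. \<omega> \<in> S \<longrightarrow>
      ennreal (real k powr p) \<le> ennreal (real (maxset (Wf f \<omega>)) powr p)"
    by eventually_elim (use assms(1,3) in \<open>auto intro!: ennreal_leI powr_mono2\<close>)
  then have "ennreal (real k powr p) * emeasure OmegaInf S \<le> moment_maxW p f"
    unfolding moment_maxW_def by (rule mult_emeasure_le_nn_integral[rotated]) (simp add: S_def)
  then have "real k powr p * influence f k \<le> enn2real (moment_maxW p f)"
    using moment enn2real_mono
    by (fastforce simp: influence_def S_def emeasure_eq_measure ennreal_mult[symmetric])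
  then show ?thesis
    using assms(3) by (simp add: pos_le_divide_eq mult.commute)
qed

end
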